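(* Let $G=(V,E)$ be a cograph and let $\sigma:V\to S$ be an hc-coloring of $G$. Then $|S|=\chi(G)$.
   Context: All graphs are finite, simple and undirected. A (proper vertex) coloring of $G=(V,E)$ is a surjective map $\sigma:V\to S$ such that $xy\in E$ implies $\sigma(x)\neq\sigma(y)$; $\chi(G)$ is the chromatic number. A cograph is a graph that is $K_1$, or a disjoint union of cographs, or a join of cographs. A cotree $(T,t)$ of a cograph $G$ is a rooted tree $T$ whose leaf set is $V$, together with a labeling $t:V^0(T)\to\{0,1\}$ of its inner vertices, such that for every inner vertex $u$ the induced subgraph $G(u):=G[L(T(u))]$ (where $L(T(u))$ is the set of leaves descending from $u$) is the disjoint union (if $t(u)=0$) or the join (if $t(u)=1$) of the graphs $G(v)$, $v$ a child of $u$. The cotree is binary if every inner vertex has exactly two children. A coloring $\sigma$ of $G$ is an hc-coloring with respect to a binary cotree $(T,t)$ if for every inner vertex $u$ of $T$ with children $v_1,v_2$: if $t(u)=1$ then $\sigma(L(T(v_1)))\cap\sigma(L(T(v_2)))=\emptyset$, and if $t(u)=0$ then $\sigma(L(T(v_1)))\cap\sigma(L(T(v_2)))\in\{\sigma(L(T(v_1))),\sigma(L(T(v_2)))\}$ (i.e., one of the two color sets contains the other). A coloring $\sigma$ of a cograph $G$ is an hc-coloring of $G$ if there exists a binary cotree $(T,t)$ of $G$ such that $\sigma$ is an hc-coloring with respect to $(T,t)$. *)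

theory Defs
  imports Main
begin

definition simple_graph :: "'a set \<Rightarrow> 'a set set \<Rightarrow> bool" where
  "simple_graph V E \<longleftrightarrow> finite V \<and> (\<forall>e\<in>E. \<exists>x y. e = {x, y} \<and> x \<noteq> y \<and> x \<in> V \<and> y \<in> V)"

inductive cograph :: "'a set \<Rightarrow> 'a set set \<Rightarrow> bool" where
  K1: "cograph {v} {}"
| union: "\<lbrakk>cograph V1 E1; cograph V2 E2; V1 \<inter> V2 = {}\<rbrakk> \<Longrightarrow> cograph (V1 \<union> V2) (E1 \<union> E2)"
| join: "\<lbrakk>cograph V1 E1; cograph V2 E2; V1 \<inter> V2 = {}\<rbrakk> \<Longrightarrow>
     cograph (V1 \<union> V2) (E1 \<union> E2 \<union> {{x, y} | x y. x \<in> V1 \<and> y \<in> V2})"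

definition proper_coloring :: "'a set \<Rightarrow> 'a set set \<Rightarrow> ('a \<Rightarrow> 'c) \<Rightarrow> bool" where
  "proper_coloring V E \<sigma> \<longleftrightarrow> (\<forall>x\<in>V. \<forall>y\<in>V. {x, y} \<in> E \<longrightarrow> \<sigma> x \<noteq> \<sigma> y)"

definition coloring :: "'a set \<Rightarrow> 'a set set \<Rightarrow> ('a \<Rightarrow> 'c) \<Rightarrow> 'c set \<Rightarrow> bool" where
  "coloring V E \<sigma> S \<longleftrightarrow> \<sigma> ` V = S \<and> proper_coloring V E \<sigma>"

definition chromatic_number :: "'a set \<Rightarrow> 'a set set \<Rightarrow> nat" where
  "chromatic_number V E = (LEAST k. \<exists>(\<sigma>::'a \<Rightarrow> nat) S. coloring V E \<sigma> S \<and> card S = k)"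

text \<open>Binary cotrees: leaves are vertices, inner vertices carry a label (True = 1 = join,
  False = 0 = disjoint union) and have exactly two children.\<close>

datatype 'a bcotree = Leaf 'a | Inner bool "'a bcotree" "'a bcotree"

primrec leaves :: "'a bcotree \<Rightarrow> 'a set" where
  "leaves (Leaf v) = {v}"
| "leaves (Inner t l r) = leaves l \<union> leaves r"

definition induced_edges :: "'a set set \<Rightarrow> 'a set \<Rightarrow> 'a set set" where
  "induced_edges E A = {e \<in> E. e \<subseteq> A}"

primrec is_bcotree_of :: "'a bcotree \<Rightarrow> 'a set \<Rightarrow> 'a set set \<Rightarrow> bool" where
  "is_bcotree_of (Leaf v) V E \<longleftrightarrow> V = {v} \<and> E = {}"
| "is_bcotree_of (Inner t l r) V E \<longleftrightarrow>
     V = leaves l \<union> leaves r \<and> leaves l \<inter> leaves r = {} \<and>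
     is_bcotree_of l (leaves l) (induced_edges E (leaves l)) \<and>
     is_bcotree_of r (leaves r) (induced_edges E (leaves r)) \<and>
     (\<forall>x\<in>leaves l. \<forall>y\<in>leaves r. ({x, y} \<in> E \<longleftrightarrow> t))"

primrec hc_wrt :: "'a bcotree \<Rightarrow> ('a \<Rightarrow> 'c) \<Rightarrow> bool" where
  "hc_wrt (Leaf v) \<sigma> \<longleftrightarrow> True"
| "hc_wrt (Inner t l r) \<sigma> \<longleftrightarrow> hc_wrt l \<sigma> \<and> hc_wrt r \<sigma> \<and>
     (if t then \<sigma> ` leaves l \<inter> \<sigma> ` leaves r = {}
      else \<sigma> ` leaves l \<inter> \<sigma> ` leaves r \<in> {\<sigma> ` leaves l, \<sigma> ` leaves r})"

definition hc_coloring :: "'a set \<Rightarrow> 'a set set \<Rightarrow> ('a \<Rightarrow> 'c) \<Rightarrow> 'c set \<Rightarrow> bool" where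
  "hc_coloring V E \<sigma> S \<longleftrightarrow> coloring V E \<sigma> S \<and>
     (\<exists>T. is_bcotree_of T V E \<and> hc_wrt T \<sigma>)"

end

theory Submission
  imports Defs
begin

text \<open>An hc-coloring along a binary cotree yields a clique with one vertex per color. At a join
  node the color sets of the two subtrees are disjoint and every vertex of one side is adjacent to
  every vertex of the other, so the cliques of both sides combine. At a union node the color set
  of one side contains that of the other, so the clique of that side already has enough vertices.
  A clique on as many vertices as there are colors forces every proper coloring to use at least
  that many colors, so the hc-coloring is optimal.\<close>

definition clique :: "'a set set \<Rightarrow> 'a set \<Rightarrow> bool" where
  "clique E K \<longleftrightarrow> (\<forall>x\<in>K. \<forall>y\<in>K. x \<noteq> y \<longrightarrow> {x, y} \<in> E)"

lemma finite_leaves: "finite (leaves T)"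
  by (induction T) auto

lemma clique_Un:
  assumes "clique E K1" and "clique E K2"
    and "\<forall>x\<in>K1. \<forall>y\<in>K2. {x, y} \<in> E"
  shows "clique E (K1 \<union> K2)"
  using assms unfolding clique_def by (metis Un_iff insert_commute)

lemma hc_wrt_clique:
  assumes "is_bcotree_of T V E" and "hc_wrt T \<sigma>"
  shows "\<exists>K \<subseteq> V. clique E K \<and> card K = card (\<sigma> ` V)"
  using assms
proof (induction T arbitrary: V E)
  case (Leaf v)
  then show ?case by (intro exI[of _ "{v}"]) (auto simp: clique_def)
next
  case (Inner t l r)
  from Inner.prems have V: "V = leaves l \<union> leaves r" and disj: "leaves l \<inter> leaves r = {}"
    and cross: "\<forall>x\<in>leaves l. \<forall>y\<in>leaves r. {x, y} \<in> E \<longleftrightarrow> t" by auto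
  have clique_mono: "clique E K" if "clique (induced_edges E A) K" for A K
    using that by (auto simp: clique_def induced_edges_def)
  from Inner.prems Inner.IH(1)[of "leaves l" "induced_edges E (leaves l)"]
  obtain Kl where Kl: "Kl \<subseteq> leaves l" "clique E Kl" "card Kl = card (\<sigma> ` leaves l)"
    by (auto dest: clique_mono)
  from Inner.prems Inner.IH(2)[of "leaves r" "induced_edges E (leaves r)"]
  obtain Kr where Kr: "Kr \<subseteq> leaves r" "clique E Kr" "card Kr = card (\<sigma> ` leaves r)"
    by (auto dest: clique_mono)
  show ?case
  proof (cases t)
    case True
    with Inner.prems have colors_disj: "\<sigma> ` leaves l \<inter> \<sigma> ` leaves r = {}" by simp
    have "card (Kl \<union> Kr) = card Kl + card Kr"
      using Kl(1) Kr(1) disj finite_leaves[of l] finite_leaves[of r]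
      by (intro card_Un_disjoint) (auto intro: finite_subset)
    also have "\<dots> = card (\<sigma> ` V)"
      using Kl(3) Kr(3) colors_disj V finite_leaves[of l] finite_leaves[of r]
      by (simp add: image_Un card_Un_disjoint)
    finally have "card (Kl \<union> Kr) = card (\<sigma> ` V)" .
    moreover have "clique E (Kl \<union> Kr)"
      using Kl Kr cross True by (intro clique_Un) auto
    ultimately show ?thesis using Kl(1) Kr(1) V by (intro exI[of _ "Kl \<union> Kr"]) auto
  next
    case False
    with Inner.prems have "\<sigma> ` leaves l \<inter> \<sigma> ` leaves r \<in> {\<sigma> ` leaves l, \<sigma> ` leaves r}"
      by simp
    then have "\<sigma> ` V = \<sigma> ` leaves r \<or> \<sigma> ` V = \<sigma> ` leaves l" using V by auto
    then show ?thesis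
    proof
      assume "\<sigma> ` V = \<sigma> ` leaves r"
      then show ?thesis using Kr V by (intro exI[of _ Kr]) auto
    next
      assume "\<sigma> ` V = \<sigma> ` leaves l"
      then show ?thesis using Kl V by (intro exI[of _ Kl]) auto
    qed
  qed
qed

lemma coloring_card_clique_le:
  assumes "coloring V E \<tau> S" and "finite V" and "K \<subseteq> V" and "clique E K"
  shows "card K \<le> card S"
proof -
  have "inj_on \<tau> K"
    using assms unfolding coloring_def proper_coloring_def clique_def inj_on_def by blast
  then have "card K = card (\<tau> ` K)" by (simp add: card_image)
  also have "\<dots> \<le> card S"
    using assms unfolding coloring_def by (intro card_mono) auto
  finally show ?thesis .
qed

lemma coloring_renumber:
  assumes "coloring V E \<sigma> S" and "finite S"
  shows "\<exists>\<tau> :: 'a \<Rightarrow> nat. coloring V E \<tau> {0..<card S}"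
proof -
  obtain h where h: "bij_betw h S {0..<card S}"
    using ex_bij_betw_finite_nat[OF assms(2)] by blast
  have "coloring V E (h \<circ> \<sigma>) {0..<card S}"
    using assms(1) h unfolding coloring_def proper_coloring_def bij_betw_def inj_on_def
    by (simp add: image_comp) blast
  then show ?thesis by blast
qed

lemma chromatic_number_eq_clique_card:
  assumes "coloring V E \<sigma> S" and "finite V"
    and "K \<subseteq> V" and "clique E K" and "card K = card S"
  shows "chromatic_number V E = card S"
  unfolding chromatic_number_def
proof (rule Least_equality)
  show "\<exists>(\<tau> :: 'a \<Rightarrow> nat) S'. coloring V E \<tau> S' \<and> card S' = card S"
    using coloring_renumber[OF assms(1)] assms(1,2) unfolding coloring_def by fastforce
  show "card S \<le> k" if "\<exists>(\<tau> :: 'a \<Rightarrow> nat) S'. coloring V E \<tau> S' \<and> card S' = k" for k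
    using that coloring_card_clique_le[OF _ assms(2-4)] assms(5) by auto
qed

theorem theorem3:
  fixes V :: "'a set" and E :: "'a set set" and \<sigma> :: "'a \<Rightarrow> 'c" and S :: "'c set"
  assumes "simple_graph V E"
    and "cograph V E"
    and "hc_coloring V E \<sigma> S"
  shows "card S = chromatic_number V E"
proof -
  have "finite V" using assms(1) by (simp add: simple_graph_def)
  from assms(3) obtain T where T: "is_bcotree_of T V E" "hc_wrt T \<sigma>"
    and col: "coloring V E \<sigma> S"
    by (auto simp: hc_coloring_def)
  then have "\<sigma> ` V = S" by (simp add: coloring_def)
  with hc_wrt_clique[OF T] obtain K where "K \<subseteq> V" "clique E K" "card K = card S"
    by auto
  with chromatic_number_eq_clique_card[OF col \<open>finite V\<close>] show ?thesis by simp
qed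

end
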